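(* For any constant $c>2$ there is a choice of sample size $\ell=O(\log n)$ such that the following holds for any weighted stream of $n$ updates: with probability at least $1-1/n$ (over the algorithm's random sampling), for every integer $0\le j<k/c$ and every item $i\in[m]$, the estimate $\hat f_i$ returned by the Reduce-By-Sample-Median algorithm (defined in the context) with $k$ counters and sample size $\ell$ satisfies $$0\le f_i-\hat f_i\le \frac{N^{\mathrm{res}(j)}}{k/c-j}.$$
   Context: A weighted stream over the universe $[m]=\{1,\dots,m\}$ is a sequence of updates $(i_1,\Delta_1),\dots,(i_n,\Delta_n)$ with $i_t\in[m]$ and real weights $\Delta_t>0$. The frequency of $i$ is $f_i=\sum_{t: i_t=i}\Delta_t$. $N^{\mathrm{res}(j)}$ denotes the sum of the frequencies of all items except the $j$ items of largest frequency (ties broken arbitrarily). The Reduce-By-Sample-Median algorithm with parameters $k\ge 1$ (number of counters) and $\ell\ge 1$ (sample size) maintains a set $T\subseteq[m]$ of at most $k$ items, each $j\in T$ carrying a nonnegative real counter $c(j)$; initially $T=\emptyset$. Update$(i,\Delta)$: if $i\in T$, set $c(i)\gets c(i)+\Delta$; else if $|T|<k$, add $i$ to $T$ with $c(i)=\Delta$; else call DecrementCounters(), and afterwards, if $\Delta\ge c^*$, add $i$ to $T$ with $c(i)=\Delta-c^*$. DecrementCounters(): sample $\ell$ counters uniformly at random from $T$ (fresh randomness in each call) and let $c^*$ be the median of the sampled counter values; for every $j\in T$ set $c(j)\gets c(j)-c^*$, and remove $j$ from $T$ if now $c(j)\le 0$. Estimate$(i)$ returns $c(i)$ if $i\in T$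 and $0$ otherwise. *)

theory Defs
  imports "HOL-Probability.Probability" "HOL-Library.Landau_Symbols"
begin

(* A weighted stream: list of updates (item, weight). Items are naturals (universe [m] = {1..m}). *)
type_synonym stream = "(nat \<times> real) list"

(* Algorithm state: the set T of tracked items and the counter function c (only meaningful on T). *)
type_synonym rbsm_state = "nat set \<times> (nat \<Rightarrow> real)"

definition freq :: "stream \<Rightarrow> nat \<Rightarrow> real" where
  "freq xs i = sum_list (map snd (filter (\<lambda>u. fst u = i) xs))"

definition Nres :: "stream \<Rightarrow> nat \<Rightarrow> nat \<Rightarrow> real" where
  "Nres xs m j = sum_list (drop j (rev (sort (map (freq xs) [1..<m+1]))))"

fun sample_list :: "nat \<Rightarrow> nat set \<Rightarrow> nat list pmf" where
  "sample_list 0 T = return_pmf []"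
| "sample_list (Suc l) T =
     bind_pmf (pmf_of_set T) (\<lambda>x. bind_pmf (sample_list l T) (\<lambda>xs. return_pmf (x # xs)))"

(* median of a nonempty list: element at position (length - 1) div 2 of the sorted list
   (the usual median for odd length, the lower median for even length) *)
definition median :: "real list \<Rightarrow> real" where
  "median vs = sort vs ! ((length vs - 1) div 2)"

(* DecrementCounters followed by the conditional insertion of i, as one random step *)
definition decrement_and_insert :: "nat \<Rightarrow> rbsm_state \<Rightarrow> nat \<Rightarrow> real \<Rightarrow> rbsm_state pmf" where
  "decrement_and_insert l s i \<Delta> =
     (case s of (T, c) \<Rightarrow>
       bind_pmf (sample_list l T) (\<lambda>xs.
         let cs = median (map c xs);
             c' = (\<lambda>j. c j - cs);
             T' = {j \<in> T. c' j > 0}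
         in if \<Delta> \<ge> cs then return_pmf (insert i T', c'(i := \<Delta> - cs))
            else return_pmf (T', c')))"

definition rbsm_update :: "nat \<Rightarrow> nat \<Rightarrow> rbsm_state \<Rightarrow> nat \<times> real \<Rightarrow> rbsm_state pmf" where
  "rbsm_update k l s u =
     (case s of (T, c) \<Rightarrow> case u of (i, \<Delta>) \<Rightarrow>
        if i \<in> T then return_pmf (T, c(i := c i + \<Delta>))
        else if card T < k then return_pmf (insert i T, c(i := \<Delta>))
        else decrement_and_insert l (T, c) i \<Delta>)"

fun rbsm_run_from :: "nat \<Rightarrow> nat \<Rightarrow> rbsm_state \<Rightarrow> stream \<Rightarrow> rbsm_state pmf" where
  "rbsm_run_from k l s [] = return_pmf s"
| "rbsm_run_from k l s (u # us) = bind_pmf (rbsm_update k l s u) (\<lambda>s'. rbsm_run_from k l s' us)"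

definition rbsm_run :: "nat \<Rightarrow> nat \<Rightarrow> stream \<Rightarrow> rbsm_state pmf" where
  "rbsm_run k l xs = rbsm_run_from k l ({}, (\<lambda>_. 0)) xs"

definition estimate :: "rbsm_state \<Rightarrow> nat \<Rightarrow> real" where
  "estimate s i = (if i \<in> fst s then snd s i else 0)"

end

theory Submission
  imports Defs
begin

text \<open>Invariant: every stored counter lies between 0 and the true frequency, and some \<open>D\<close> (the total
  amount decremented so far) bounds every undercount \<open>f i - est i\<close> while, for every set \<open>J\<close> of
  fewer than \<open>k/c\<close> items, the undercounts outside \<open>J\<close> sum to at least \<open>D (k/c - |J|)\<close>. A decrement
  by the sample median \<open>c*\<close> raises \<open>D\<close> by \<open>c*\<close> and keeps the invariant provided at least \<open>k/c\<close>
  counters were \<open>\<ge> c*\<close>, each of which is then charged \<open>c*\<close>. Otherwise at least half of the \<open>l\<close>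
  samples fall among the fewer than \<open>k/c\<close> counters of rank below \<open>k/c\<close>, a set of density below
  \<open>1/c\<close>; by a Chernoff bound this has probability at most \<open>\<rho>^l\<close> with \<open>\<rho> = 2\<surd>(c-1)/c < 1\<close>. A union
  bound over the \<open>n\<close> updates with \<open>l \<approx> 2 ln n / ln(1/\<rho>)\<close> gives failure probability \<open>1/n\<close>, and
  taking for \<open>J\<close> the \<open>j\<close> heaviest items yields \<open>f i - est i \<le> D \<le> N^res(j) / (k/c - j)\<close>.\<close>

lemma measure_pmf_prob_bind:
  "measure_pmf.prob (bind_pmf M f) X = measure_pmf.expectation M (\<lambda>x. measure_pmf.prob (f x) X)"
  unfolding measure_pmf_bind
  by (rule measure_pmf.measure_bind[where N="count_space UNIV"])
     (auto simp: measurable_def space_subprob_algebra prob_space_imp_subprob_space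
        measure_pmf.prob_space_axioms)

lemma measure_pmf_prob_bind_le:
  assumes "\<And>x. x \<in> set_pmf M \<Longrightarrow> x \<notin> B \<Longrightarrow> measure_pmf.prob (f x) X \<le> b" and "0 \<le> b"
  shows "measure_pmf.prob (bind_pmf M f) X \<le> measure_pmf.prob M B + b"
proof -
  have "measure_pmf.prob (bind_pmf M f) X = measure_pmf.expectation M (\<lambda>x. measure_pmf.prob (f x) X)"
    by (rule measure_pmf_prob_bind)
  also have "\<dots> \<le> measure_pmf.expectation M (\<lambda>x. indicator B x + b)"
  proof (rule integral_mono_AE)
    show "integrable (measure_pmf M) (\<lambda>x. measure_pmf.prob (f x) X)"
      by (rule measure_pmf.integrable_const_bound[where B=1]) auto
    show "integrable (measure_pmf M) (\<lambda>x. indicator B x + b)"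
      by (rule measure_pmf.integrable_const_bound[where B="1 + b"]) (auto simp: indicator_def assms)
    show "AE x in measure_pmf M. measure_pmf.prob (f x) X \<le> indicator B x + b"
      using assms by (auto simp: AE_measure_pmf_iff indicator_def
          intro: order.trans[OF measure_pmf.prob_le_1])
  qed
  also have "\<dots> = measure_pmf.prob M B + b"
    by (subst Bochner_Integration.integral_add)
       (auto intro!: measure_pmf.integrable_const_bound[where B=1] simp: indicator_def)
  finally show ?thesis .
qed

lemma sample_list_Suc_map:
  "sample_list (Suc l) T = bind_pmf (pmf_of_set T) (\<lambda>x. map_pmf (Cons x) (sample_list l T))"
  by (simp add: map_pmf_def)

lemma set_pmf_sample_list:
  assumes "finite T" "T \<noteq> {}" "xs \<in> set_pmf (sample_list l T)"
  shows "set xs \<subseteq> T" and "length xs = l"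
  using assms(3) by (induction l arbitrary: xs) (use assms(1,2) in force)+

text \<open>The Chernoff bound through the moment \<open>lam ^ (number of hits)\<close>; the threshold \<open>s\<close> is
  generalized for the induction.\<close>
lemma prob_sample_list_hits_ge:
  assumes T: "finite T" "T \<noteq> {}" and "A \<subseteq> T" and lam: "1 \<le> lam"
  shows "measure_pmf.prob (sample_list l T) {xs. s \<le> real (length (filter (\<lambda>x. x \<in> A) xs))}
     \<le> (1 + real (card A) / real (card T) * (lam - 1)) ^ l / lam powr s"
proof (induction l arbitrary: s)
  case 0
  have "lam powr s \<le> 1" if "s \<le> 0" using powr_mono[of s 0 lam] lam that by simp
  then show ?case using lam by (auto simp: field_simps indicator_def)
next
  case (Suc l)
  define a where "a = 1 + real (card A) / real (card T) * (lam - 1)"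
  define g where "g x = measure_pmf.prob (map_pmf (Cons x) (sample_list l T))
    {xs. s \<le> real (length (filter (\<lambda>x. x \<in> A) xs))}" for x
  have card_T: "real (card T) > 0" using T by (simp add: card_gt_0_iff)
  have "g x \<le> a ^ l / lam powr (s - 1)" if "x \<in> A" for x
    using that Suc.IH[of "s - 1"] by (simp add: g_def a_def vimage_def algebra_simps)
  moreover have "g x \<le> a ^ l / lam powr s" if "x \<notin> A" for x
    using that Suc.IH[of s] by (simp add: g_def a_def vimage_def)
  ultimately have "sum g T \<le> (\<Sum>x\<in>T. if x \<in> A then a ^ l / lam powr (s - 1) else a ^ l / lam powr s)"
    by (intro sum_mono) auto
  also have "\<dots> = card A * (a ^ l / lam powr (s - 1)) + card (T - A) * (a ^ l / lam powr s)"
    using T assms(3) by (simp add: sum.If_cases Int_absorb1 Diff_eq finite_subset)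
  also have "\<dots> = a ^ l / lam powr s * (card A * lam + card (T - A))"
    using lam by (simp add: powr_diff field_simps)
  also have "\<dots> = a ^ Suc l / lam powr s * card T"
  proof -
    have "real (card (T - A)) = real (card T) - real (card A)"
      using T assms(3) by (simp add: card_Diff_subset card_mono finite_subset)
    moreover have "a * card T = card T + card A * (lam - 1)"
      using card_T by (simp add: a_def field_simps)
    ultimately have "card A * lam + card (T - A) = a * card T"
      by (simp add: algebra_simps)
    then show ?thesis by (simp add: mult_ac)
  qed
  finally have "sum g T / card T \<le> a ^ Suc l / lam powr s"
    using card_T by (simp add: divide_le_eq)
  moreover have "measure_pmf.prob (sample_list (Suc l) T)
      {xs. s \<le> real (length (filter (\<lambda>x. x \<in> A) xs))} = sum g T / card T"
    unfolding sample_list_Suc_map measure_pmf_prob_bind g_def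
    by (rule integral_pmf_of_set[OF T(2,1)])
  ultimately show ?case by (simp add: a_def)
qed

lemma median_in_set:
  assumes "vs \<noteq> []"
  shows "median vs \<in> set vs"
proof -
  have "(length vs - 1) div 2 < length (sort vs)"
    using assms by (cases vs) auto
  then show ?thesis by (metis median_def nth_mem set_sort)
qed

lemma half_length_le_count_ge_median:
  assumes "vs \<noteq> []"
  shows "real (length vs) / 2 \<le> real (length (filter (\<lambda>v. median vs \<le> v) vs))"
proof -
  define h where "h = (length vs - 1) div 2"
  define ss where "ss = sort vs"
  have h: "h < length ss" using assms by (cases vs) (auto simp: h_def ss_def)
  have "median vs \<le> v" if "v \<in> set (drop h ss)" for v
  proof -
    obtain p where "p < length ss - h" "v = ss ! (h + p)"
      using \<open>v \<in> set (drop h ss)\<close> h by (auto simp: in_set_conv_nth)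
    moreover have "median vs = ss ! h" by (simp add: median_def ss_def h_def)
    ultimately show ?thesis by (simp add: ss_def sorted_nth_mono)
  qed
  then have "length (drop h ss) \<le> length (filter (\<lambda>v. median vs \<le> v) ss)"
    by (metis append_take_drop_id filter_append filter_True length_append le_add2)
  also have "\<dots> = length (filter (\<lambda>v. median vs \<le> v) vs)"
    by (metis ss_def mset_sort mset_filter size_mset)
  finally show ?thesis by (simp add: ss_def h_def)
qed

lemma length_filter_mono_on:
  "(\<And>x. x \<in> set xs \<Longrightarrow> P x \<Longrightarrow> Q x) \<Longrightarrow> length (filter P xs) \<le> length (filter Q xs)"
  by (induction xs) auto

definition top_ranked :: "'a set \<Rightarrow> ('a \<Rightarrow> real) \<Rightarrow> real \<Rightarrow> 'a set" where
  "top_ranked T c r = {y \<in> T. real (card {j \<in> T. c y \<le> c j}) < r}"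

lemma top_ranked_subset: "top_ranked T c r \<subseteq> T"
  by (auto simp: top_ranked_def)

lemma card_top_ranked_less:
  assumes "finite T" and "0 < r"
  shows "real (card (top_ranked T c r)) < r"
proof (cases "top_ranked T c r = {}")
  case True
  then show ?thesis using assms(2) by simp
next
  case False
  let ?A = "top_ranked T c r"
  have "finite ?A" using assms(1) by (simp add: top_ranked_def)
  then have "Min (c ` ?A) \<in> c ` ?A"
    using False by (intro Min_in) auto
  then obtain y where y: "y \<in> ?A" "c y = Min (c ` ?A)"
    by auto
  have "?A \<subseteq> {j \<in> T. c y \<le> c j}"
    using y \<open>finite ?A\<close> by (auto simp: top_ranked_def)
  then have "card ?A \<le> card {j \<in> T. c y \<le> c j}"
    using assms(1) by (simp add: card_mono)
  moreover have "real (card {j \<in> T. c y \<le> c j}) < r"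
    using y(1) by (simp add: top_ranked_def)
  ultimately show ?thesis by linarith
qed

text \<open>Every sample whose counter is at least the sample median is top-ranked, and at least half of
  the samples are such.\<close>
lemma half_length_le_count_top_ranked:
  assumes "set xs \<subseteq> T" "xs \<noteq> []" "finite T"
    and "real (card {j \<in> T. median (map c xs) \<le> c j}) < r"
  shows "real (length xs) / 2 \<le> real (length (filter (\<lambda>x. x \<in> top_ranked T c r) xs))"
proof -
  let ?med = "median (map c xs)"
  have "x \<in> top_ranked T c r" if "x \<in> set xs" "?med \<le> c x" for x
  proof -
    have "card {j \<in> T. c x \<le> c j} \<le> card {j \<in> T. ?med \<le> c j}"
      using \<open>?med \<le> c x\<close> assms(3) by (intro card_mono) auto
    then show ?thesis using that assms(1,4) by (auto simp: top_ranked_def)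
  qed
  then have "length (filter (\<lambda>x. ?med \<le> c x) xs) \<le> length (filter (\<lambda>x. x \<in> top_ranked T c r) xs)"
    by (intro length_filter_mono_on) auto
  moreover have "real (length xs) / 2 \<le> real (length (filter (\<lambda>x. ?med \<le> c x) xs))"
    using half_length_le_count_ge_median[of "map c xs"] assms(2) by (simp add: filter_map comp_def)
  ultimately show ?thesis by linarith
qed

definition rho :: "real \<Rightarrow> real" where
  "rho c = 2 * sqrt (c - 1) / c"

lemma rho_pos: "2 < c \<Longrightarrow> 0 < rho c"
  by (simp add: rho_def)

lemma rho_less_1:
  assumes "2 < c"
  shows "rho c < 1"
proof -
  have "(2 * sqrt (c - 1))\<^sup>2 = 4 * (c - 1)"
    using assms by simp
  also have "\<dots> < c\<^sup>2"
  proof -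
    have "0 < (c - 2)\<^sup>2" using assms by simp
    then show ?thesis by (simp add: power2_eq_square algebra_simps)
  qed
  finally have "2 * sqrt (c - 1) < c"
    by (rule power2_less_imp_less) (use assms in simp)
  then show ?thesis using assms by (simp add: rho_def)
qed

lemma chernoff_bound_le_rho_power:
  assumes c: "2 < c" and p: "0 \<le> p" "p \<le> 1 / c"
  shows "(1 + p * (c - 2)) ^ l / (c - 1) powr (real l / 2) \<le> rho c ^ l"
proof -
  have "(c - 1) powr (real l / 2) = ((c - 1) powr (1 / 2)) powr real l"
    using c by (simp add: powr_powr)
  also have "\<dots> = sqrt (c - 1) ^ l"
    using c by (simp add: powr_half_sqrt powr_realpow)
  finally have "(c - 1) powr (real l / 2) = sqrt (c - 1) ^ l" .
  moreover have "(1 + p * (c - 2)) / sqrt (c - 1) \<le> rho c"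
  proof -
    have "1 + p * (c - 2) \<le> 1 + 1 / c * (c - 2)"
      using c p by (intro add_left_mono mult_right_mono) auto
    also have "\<dots> = sqrt (c - 1) * rho c"
      using c by (simp add: rho_def field_simps)
    finally show ?thesis using c by (simp add: divide_le_eq mult.commute)
  qed
  then have "((1 + p * (c - 2)) / sqrt (c - 1)) ^ l \<le> rho c ^ l"
    using c p by (intro power_mono) auto
  ultimately show ?thesis by (simp add: power_divide)
qed

lemma prob_sample_median_low_rank:
  fixes c :: "nat \<Rightarrow> real" and cc :: real
  assumes cc: "2 < cc" and T: "finite T" "k \<le> card T" and k: "1 \<le> k" and l: "1 \<le> l"
  shows "measure_pmf.prob (sample_list l T)
           {xs. real (card {j \<in> T. median (map c xs) \<le> c j}) < real k / cc} \<le> rho cc ^ l"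
proof -
  let ?A = "top_ranked T c (real k / cc)"
  have T_ne: "T \<noteq> {}" using T k by auto
  have card_A: "real (card ?A) < real k / cc"
    using T k cc by (intro card_top_ranked_less) auto
  have "real (card ?A) / real (card T) \<le> 1 / cc"
  proof -
    have "real k / cc \<le> real (card T) / cc" using T cc by (intro divide_right_mono) auto
    then show ?thesis using card_A T T_ne cc by (simp add: card_gt_0_iff field_simps)
  qed
  have "measure_pmf.prob (sample_list l T)
           {xs. real (card {j \<in> T. median (map c xs) \<le> c j}) < real k / cc}
      \<le> measure_pmf.prob (sample_list l T)
           {xs. real l / 2 \<le> real (length (filter (\<lambda>x. x \<in> ?A) xs))}"
  proof (rule measure_pmf.finite_measure_mono_AE, rule AE_pmfI, safe)
    fix xs assume xs: "xs \<in> set_pmf (sample_list l T)"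
      and "real (card {j \<in> T. median (map c xs) \<le> c j}) < real k / cc"
    moreover have "xs \<noteq> []" using set_pmf_sample_list(2)[OF T(1) T_ne xs] l by auto
    ultimately show "real l / 2 \<le> real (length (filter (\<lambda>x. x \<in> ?A) xs))"
      using half_length_le_count_top_ranked[OF set_pmf_sample_list(1)[OF T(1) T_ne xs]]
        set_pmf_sample_list(2)[OF T(1) T_ne xs] T(1) by simp
  qed simp
  also have "\<dots> \<le> (1 + real (card ?A) / real (card T) * (cc - 2)) ^ l / (cc - 1) powr (real l / 2)"
    using prob_sample_list_hits_ge[OF T(1) T_ne top_ranked_subset, of "cc - 1" l "real l / 2"] cc
    by simp
  also have "\<dots> \<le> rho cc ^ l"
    by (rule chernoff_bound_le_rho_power) (use cc \<open>real (card ?A) / real (card T) \<le> 1 / cc\<close> in auto)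
  finally show ?thesis .
qed

definition valid_stream :: "nat \<Rightarrow> stream \<Rightarrow> bool" where
  "valid_stream m xs \<longleftrightarrow> (\<forall>u \<in> set xs. fst u \<in> {1..m} \<and> 0 < snd u)"

definition undercount :: "stream \<Rightarrow> rbsm_state \<Rightarrow> nat \<Rightarrow> real" where
  "undercount xs s i = freq xs i - estimate s i"

text \<open>In the algorithm \<open>D\<close> is the total amount decremented so far; each decrement is charged to at
  least \<open>r\<close> items.\<close>
definition error_bound :: "real \<Rightarrow> nat set \<Rightarrow> (nat \<Rightarrow> real) \<Rightarrow> real \<Rightarrow> bool" where
  "error_bound r U e D \<longleftrightarrow> 0 \<le> D \<and> (\<forall>i \<in> U. e i \<le> D) \<and>
     (\<forall>J \<subseteq> U. real (card J) < r \<longrightarrow> D * (r - real (card J)) \<le> (\<Sum>i \<in> U - J. e i))"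

lemma error_bound_add_uniform:
  assumes bound: "error_bound r U e D" and "finite U"
    and Q: "Q \<subseteq> U" "r \<le> real (card Q)"
    and d: "0 \<le> d" "\<forall>i \<in> U. 0 \<le> \<delta> i \<and> \<delta> i \<le> d" "\<forall>i \<in> Q. \<delta> i = d"
  shows "error_bound r U (\<lambda>i. e i + \<delta> i) (D + d)"
  unfolding error_bound_def
proof (intro conjI ballI allI impI)
  show "0 \<le> D + d" using bound d by (simp add: error_bound_def)
  show "e i + \<delta> i \<le> D + d" if "i \<in> U" for i
    using bound d that by (simp add: error_bound_def add_mono)
next
  fix J assume J: "J \<subseteq> U" "real (card J) < r"
  have "card Q \<le> card ((Q - J) \<union> J)"
    using \<open>finite U\<close> Q J by (intro card_mono) (auto intro: finite_subset)
  also have "\<dots> \<le> card (Q - J) + card J" by (rule card_Un_le)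
  finally have "card Q \<le> card (Q - J) + card J" .
  then have "r - real (card J) \<le> real (card (Q - J))" using Q by linarith
  then have "d * (r - real (card J)) \<le> (\<Sum>i \<in> Q - J. \<delta> i)"
    using d by (simp add: mult_left_mono mult.commute)
  also have "\<dots> \<le> (\<Sum>i \<in> U - J. \<delta> i)"
    using \<open>finite U\<close> Q d by (intro sum_mono2) auto
  finally have "d * (r - real (card J)) \<le> (\<Sum>i \<in> U - J. \<delta> i)" .
  moreover have "D * (r - real (card J)) \<le> (\<Sum>i \<in> U - J. e i)"
    using bound J by (simp add: error_bound_def)
  ultimately show "(D + d) * (r - real (card J)) \<le> (\<Sum>i \<in> U - J. e i + \<delta> i)"
    by (simp add: sum.distrib algebra_simps)
qed

lemma error_bound_le_residual:
  assumes bound: "error_bound r U e D" and "i \<in> U"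
    and J: "J \<subseteq> U" "card J \<le> j" "real j < r" and e_le: "\<forall>i \<in> U. e i \<le> f i"
  shows "e i \<le> (\<Sum>i \<in> U - J. f i) / (r - real j)"
proof -
  have "D * (r - real j) \<le> D * (r - real (card J))"
    using bound J by (intro mult_left_mono) (auto simp: error_bound_def)
  also have "\<dots> \<le> (\<Sum>i \<in> U - J. e i)"
    using bound J by (simp add: error_bound_def)
  also have "\<dots> \<le> (\<Sum>i \<in> U - J. f i)"
    using e_le by (intro sum_mono) auto
  finally have "D \<le> (\<Sum>i \<in> U - J. f i) / (r - real j)"
    using J by (simp add: pos_le_divide_eq)
  moreover have "e i \<le> D" using bound \<open>i \<in> U\<close> by (simp add: error_bound_def)
  ultimately show ?thesis by linarith
qed

lemma Nres_eq_sum_outside: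
  "\<exists>J \<subseteq> {1..m}. card J \<le> j \<and> Nres xs m j = (\<Sum>i \<in> {1..m} - J. freq xs i)"
proof -
  define ks where "ks = rev (sort_key (freq xs) [1..<m+1])"
  have "sort (map (freq xs) [1..<m+1]) = map (freq xs) (sort_key (freq xs) [1..<m+1])"
    by (rule properties_for_sort) simp_all
  then have Nres: "Nres xs m j = sum_list (map (freq xs) (drop j ks))"
    by (simp add: Nres_def ks_def rev_map drop_map)
  have ks: "distinct ks" "set ks = {1..m}" by (auto simp: ks_def)
  define J where "J = set (take j ks)"
  have "set ks = J \<union> set (drop j ks)" "J \<inter> set (drop j ks) = {}"
    using ks(1) by (auto simp: J_def set_take_disj_set_drop_if_distinct
        simp flip: set_append)
  then have "set (drop j ks) = {1..m} - J" using ks(2) by blast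
  moreover have "J \<subseteq> {1..m}" "card J \<le> j"
    using ks by (auto simp: J_def dest: in_set_takeD intro: card_length[THEN order_trans])
  ultimately show ?thesis
    using Nres ks by (metis sum_list_distinct_conv_sum_set distinct_drop)
qed

lemma freq_nonneg: "\<forall>u \<in> set xs. 0 \<le> snd u \<Longrightarrow> 0 \<le> freq xs i"
  unfolding freq_def by (induction xs) auto

lemma freq_append_single: "freq (xs @ [(i, d)]) j = freq xs j + (if i = j then d else 0)"
  by (simp add: freq_def)

definition rbsm_invariant :: "real \<Rightarrow> nat \<Rightarrow> stream \<Rightarrow> rbsm_state \<Rightarrow> bool" where
  "rbsm_invariant r m xs s \<longleftrightarrow> fst s \<subseteq> {1..m} \<and>
     (\<forall>i \<in> fst s. 0 \<le> snd s i \<and> snd s i \<le> freq xs i) \<and> (\<exists>D. error_bound r {1..m} (undercount xs s) D)"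

lemma rbsm_invariant_Nil: "rbsm_invariant r m [] ({}, \<lambda>_. 0)"
  by (auto simp: rbsm_invariant_def error_bound_def undercount_def freq_def estimate_def)

lemma rbsm_invariant_imp_error_le:
  assumes inv: "rbsm_invariant r m xs s" and "valid_stream m xs"
    and "real j < r" and "i \<in> {1..m}"
  shows "0 \<le> freq xs i - estimate s i \<and> freq xs i - estimate s i \<le> Nres xs m j / (r - real j)"
proof
  have counters: "\<forall>i \<in> fst s. 0 \<le> snd s i \<and> snd s i \<le> freq xs i"
    and "\<exists>D. error_bound r {1..m} (undercount xs s) D"
    using inv by (auto simp: rbsm_invariant_def)
  then obtain D where bound: "error_bound r {1..m} (undercount xs s) D" by blast
  have "0 \<le> freq xs i" using \<open>valid_stream m xs\<close> freq_nonneg by (force simp: valid_stream_def)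
  then show "0 \<le> freq xs i - estimate s i"
    using counters by (simp add: estimate_def)
  obtain J where J: "J \<subseteq> {1..m}" "card J \<le> j" "Nres xs m j = (\<Sum>i \<in> {1..m} - J. freq xs i)"
    using Nres_eq_sum_outside by blast
  have "\<forall>i \<in> {1..m}. undercount xs s i \<le> freq xs i"
    using counters by (auto simp: undercount_def estimate_def)
  then show "freq xs i - estimate s i \<le> Nres xs m j / (r - real j)"
    using error_bound_le_residual[OF bound \<open>i \<in> {1..m}\<close> J(1,2) \<open>real j < r\<close>] J(3)
    by (simp add: undercount_def)
qed

lemma rbsm_invariant_increment:
  assumes "rbsm_invariant r m xs (T, c)" "i \<in> T" "0 < d"
  shows "rbsm_invariant r m (xs @ [(i, d)]) (T, c(i := c i + d))"
proof -
  have "undercount (xs @ [(i, d)]) (T, c(i := c i + d)) = undercount xs (T, c)"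
    using assms(2) by (auto simp: undercount_def freq_append_single estimate_def)
  then show ?thesis
    using assms by (auto simp: rbsm_invariant_def freq_append_single)
qed

lemma rbsm_invariant_insert:
  assumes "rbsm_invariant r m xs (T, c)" "valid_stream m xs" "i \<notin> T" "i \<in> {1..m}" "0 < d"
  shows "rbsm_invariant r m (xs @ [(i, d)]) (insert i T, c(i := d))"
proof -
  have "undercount (xs @ [(i, d)]) (insert i T, c(i := d)) = undercount xs (T, c)"
    using assms(3) by (auto simp: undercount_def freq_append_single estimate_def)
  moreover have "0 \<le> freq xs i"
    using assms(2) freq_nonneg by (force simp: valid_stream_def)
  ultimately show ?thesis
    using assms by (auto simp: rbsm_invariant_def freq_append_single)
qed

text \<open>The undercount of a tracked item \<open>j\<close> grows by \<open>min (c j) cs\<close>, that of the new item by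
  \<open>min d cs\<close>; the at least \<open>r\<close> counters that were \<open>\<ge> cs\<close> are charged exactly \<open>cs\<close>.\<close>
lemma rbsm_invariant_decrement:
  assumes inv: "rbsm_invariant r m xs (T, c)" and "valid_stream m xs"
    and i: "i \<notin> T" "i \<in> {1..m}" "0 < d"
    and cs: "0 \<le> cs" "r \<le> real (card {j \<in> T. cs \<le> c j})"
  shows "rbsm_invariant r m (xs @ [(i, d)])
    (let c' = (\<lambda>j. c j - cs); T' = {j \<in> T. 0 < c' j}
     in if cs \<le> d then (insert i T', c'(i := d - cs)) else (T', c'))"
    (is "rbsm_invariant r m ?xs' ?s'")
proof -
  have T: "T \<subseteq> {1..m}" and counters: "\<forall>j \<in> T. 0 \<le> c j \<and> c j \<le> freq xs j"
    and "\<exists>D. error_bound r {1..m} (undercount xs (T, c)) D"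
    using inv by (auto simp: rbsm_invariant_def)
  then obtain D where bound: "error_bound r {1..m} (undercount xs (T, c)) D" by blast
  have "0 \<le> freq xs i" using \<open>valid_stream m xs\<close> freq_nonneg by (force simp: valid_stream_def)
  define \<delta> where "\<delta> j = (if j \<in> T then min (c j) cs else if j = i then min d cs else 0)" for j
  have "undercount ?xs' ?s' j = undercount xs (T, c) j + \<delta> j" for j
    using i by (cases "j \<in> T")
      (auto simp: undercount_def estimate_def freq_append_single \<delta>_def min_def Let_def)
  then have "undercount ?xs' ?s' = (\<lambda>j. undercount xs (T, c) j + \<delta> j)" by blast
  moreover have "error_bound r {1..m} (\<lambda>j. undercount xs (T, c) j + \<delta> j) (D + cs)"
    by (rule error_bound_add_uniform[OF bound _ _ cs(2)])
      (use T counters cs(1) i in \<open>auto simp: \<delta>_def\<close>)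
  moreover have "fst ?s' \<subseteq> {1..m} \<and> (\<forall>j \<in> fst ?s'. 0 \<le> snd ?s' j \<and> snd ?s' j \<le> freq ?xs' j)"
    using T counters i cs(1) \<open>0 \<le> freq xs i\<close> by (auto simp: freq_append_single Let_def)
  ultimately show ?thesis by (auto simp: rbsm_invariant_def)
qed

lemma prob_decrement_and_insert_breaks_invariant:
  assumes inv: "rbsm_invariant (real k / cc) m xs (T, c)" and valid: "valid_stream m xs"
    and i: "i \<notin> T" "i \<in> {1..m}" "0 < d"
    and cc: "2 < cc" and k: "1 \<le> k" "k \<le> card T" and l: "1 \<le> l"
  shows "measure_pmf.prob (decrement_and_insert l (T, c) i d)
           {s'. \<not> rbsm_invariant (real k / cc) m (xs @ [(i, d)]) s'} \<le> rho cc ^ l"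
proof -
  have "T \<subseteq> {1..m}" and counters: "\<forall>j \<in> T. 0 \<le> c j"
    using inv by (auto simp: rbsm_invariant_def)
  have "finite T" using \<open>T \<subseteq> {1..m}\<close> by (rule finite_subset) simp
  moreover have "T \<noteq> {}" using k by auto
  ultimately have T: "finite T" "T \<noteq> {}" by blast+
  let ?low = "{xs. real (card {j \<in> T. median (map c xs) \<le> c j}) < real k / cc}"
  have "measure_pmf.prob (decrement_and_insert l (T, c) i d)
           {s'. \<not> rbsm_invariant (real k / cc) m (xs @ [(i, d)]) s'}
      \<le> measure_pmf.prob (sample_list l T) ?low + 0"
    unfolding decrement_and_insert_def prod.case
  proof (rule measure_pmf_prob_bind_le)
    fix ys assume ys: "ys \<in> set_pmf (sample_list l T)" "ys \<notin> ?low"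
    have "length ys = l" by (rule set_pmf_sample_list(2)[OF T ys(1)])
    then have "map c ys \<noteq> []" using l by auto
    then have "median (map c ys) \<in> set (map c ys)" by (rule median_in_set)
    then have cs: "0 \<le> median (map c ys)"
      using set_pmf_sample_list(1)[OF T ys(1)] counters by auto
    have "real k / cc \<le> real (card {j \<in> T. median (map c ys) \<le> c j})"
      using ys(2) by simp
    with rbsm_invariant_decrement[OF inv valid i cs]
    show "measure_pmf.prob (let cs = median (map c ys); c' = \<lambda>j. c j - cs; T' = {j \<in> T. 0 < c' j}
          in if d \<ge> cs then return_pmf (insert i T', c'(i := d - cs)) else return_pmf (T', c'))
          {s'. \<not> rbsm_invariant (real k / cc) m (xs @ [(i, d)]) s'} \<le> 0"
      by (simp add: Let_def split: if_splits)
  qed simp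
  also have "\<dots> \<le> rho cc ^ l"
    using prob_sample_median_low_rank[OF cc T(1) k(2,1) l] by simp
  finally show ?thesis .
qed

lemma prob_rbsm_update_breaks_invariant:
  assumes inv: "rbsm_invariant (real k / cc) m xs s" and valid: "valid_stream m (xs @ [u])"
    and cc: "2 < cc" and k: "1 \<le> k" and l: "1 \<le> l"
  shows "measure_pmf.prob (rbsm_update k l s u)
           {s'. \<not> rbsm_invariant (real k / cc) m (xs @ [u]) s'} \<le> rho cc ^ l"
proof -
  obtain T c i d where s: "s = (T, c)" and u: "u = (i, d)" by (cases s, cases u)
  have i: "i \<in> {1..m}" "0 < d" and valid_xs: "valid_stream m xs"
    using valid by (auto simp: valid_stream_def u)
  have "0 \<le> rho cc ^ l" using rho_pos[OF cc] by simp
  consider "i \<in> T" | "i \<notin> T" "card T < k" | "i \<notin> T" "k \<le> card T" by linarith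
  then show ?thesis
  proof cases
    case 1
    with rbsm_invariant_increment[OF inv[unfolded s] 1 i(2)] \<open>0 \<le> rho cc ^ l\<close> show ?thesis
      by (simp add: rbsm_update_def s u)
  next
    case 2
    with rbsm_invariant_insert[OF inv[unfolded s] valid_xs 2(1) i] \<open>0 \<le> rho cc ^ l\<close> show ?thesis
      by (simp add: rbsm_update_def s u)
  next
    case 3
    with prob_decrement_and_insert_breaks_invariant[OF inv[unfolded s] valid_xs 3(1) i cc k 3(2) l]
    show ?thesis by (simp add: rbsm_update_def s u)
  qed
qed

lemma prob_rbsm_run_from_breaks_invariant:
  assumes "rbsm_invariant (real k / cc) m xs s" and "valid_stream m (xs @ us)"
    and cc: "2 < cc" and k: "1 \<le> k" and l: "1 \<le> l"
  shows "measure_pmf.prob (rbsm_run_from k l s us)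
           {s'. \<not> rbsm_invariant (real k / cc) m (xs @ us) s'} \<le> real (length us) * rho cc ^ l"
  using assms(1,2)
proof (induction us arbitrary: xs s)
  case Nil
  then show ?case by simp
next
  case (Cons u us)
  let ?broken = "{s'. \<not> rbsm_invariant (real k / cc) m (xs @ [u]) s'}"
  have "measure_pmf.prob (rbsm_run_from k l s (u # us))
          {s'. \<not> rbsm_invariant (real k / cc) m (xs @ u # us) s'}
      \<le> measure_pmf.prob (rbsm_update k l s u) ?broken + real (length us) * rho cc ^ l"
    unfolding rbsm_run_from.simps
  proof (rule measure_pmf_prob_bind_le)
    fix s' assume "s' \<notin> ?broken"
    with Cons.IH[of "xs @ [u]" s'] Cons.prems(2)
    show "measure_pmf.prob (rbsm_run_from k l s' us)
            {s'. \<not> rbsm_invariant (real k / cc) m (xs @ u # us) s'} \<le> real (length us) * rho cc ^ l"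
      by simp
  qed (use rho_pos[OF cc] in simp)
  also have "\<dots> \<le> rho cc ^ l + real (length us) * rho cc ^ l"
    using prob_rbsm_update_breaks_invariant[OF Cons.prems(1) _ cc k l, of u] Cons.prems(2)
    by (simp add: valid_stream_def)
  finally show ?case by (simp add: algebra_simps)
qed

lemma prob_rbsm_run_error_bounds:
  assumes "valid_stream m xs" and cc: "2 < cc" and k: "1 \<le> k" and l: "1 \<le> l"
  shows "1 - real (length xs) * rho cc ^ l \<le> measure_pmf.prob (rbsm_run k l xs)
           {s. \<forall>j::nat. real j < real k / cc \<longrightarrow> (\<forall>i \<in> {1..m}.
                0 \<le> freq xs i - estimate s i \<and>
                freq xs i - estimate s i \<le> Nres xs m j / (real k / cc - real j))}"
    (is "_ \<le> measure_pmf.prob ?M ?good")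
proof -
  let ?broken = "{s. \<not> rbsm_invariant (real k / cc) m xs s}"
  have "measure_pmf.prob ?M ?broken \<le> real (length xs) * rho cc ^ l"
    using prob_rbsm_run_from_breaks_invariant[of k cc m "[]" _ xs, OF rbsm_invariant_Nil]
      assms by (simp add: rbsm_run_def)
  moreover have "measure_pmf.prob ?M (UNIV - ?broken) \<le> measure_pmf.prob ?M ?good"
    using rbsm_invariant_imp_error_le[OF _ assms(1)]
    by (intro measure_pmf.finite_measure_mono) auto
  moreover have "measure_pmf.prob ?M (UNIV - ?broken) = 1 - measure_pmf.prob ?M ?broken"
    using measure_pmf.prob_compl[of ?broken ?M] by simp
  ultimately show ?thesis by linarith
qed

lemma mult_power_le_inverse:
  fixes r :: real
  assumes r: "0 < r" "r < 1" and n: "1 \<le> n" and l: "2 / - ln r * ln (real n) \<le> real l"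
  shows "real n * r ^ l \<le> 1 / real n"
proof -
  have "ln r < 0" using r by simp
  then have "real l * ln r \<le> (2 / - ln r * ln (real n)) * ln r"
    using l by (intro mult_right_mono_neg) auto
  also have "\<dots> = ln (1 / real n ^ 2)"
    using \<open>ln r < 0\<close> n by (simp add: ln_div ln_realpow field_simps)
  finally have "r ^ l \<le> 1 / real n ^ 2"
    using r n by (simp flip: ln_realpow)
  then have "real n * r ^ l \<le> real n * (1 / real n ^ 2)"
    using n by (intro mult_left_mono) auto
  also have "\<dots> = 1 / real n" using n by (simp add: power2_eq_square)
  finally show ?thesis .
qed

lemma ceiling_ln_bigo:
  assumes "0 \<le> K"
  shows "(\<lambda>n. real (nat \<lceil>K * ln (real n)\<rceil> + 1)) \<in> O(\<lambda>n. ln (real n))"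
proof (rule bigoI[where c = "K + 2"])
  show "\<forall>\<^sub>F n in at_top. norm (real (nat \<lceil>K * ln (real n)\<rceil> + 1)) \<le> (K + 2) * norm (ln (real n))"
    using eventually_ge_at_top[of "3::nat"]
  proof eventually_elim
    case (elim n)
    have "exp 1 \<le> real n" using exp_le elim by linarith
    then have ln_n: "1 \<le> ln (real n)" using ln_ge_iff[of "real n" 1] elim by simp
    then have "real (nat \<lceil>K * ln (real n)\<rceil> + 1) \<le> K * ln (real n) + 2"
      using assms by simp linarith
    also have "\<dots> \<le> (K + 2) * ln (real n)" using ln_n by (simp add: algebra_simps)
    finally show ?case using ln_n by simp
  qed
qed

theorem theorem8:
  fixes c :: real
  assumes "c > 2"
  shows "\<exists>L :: nat \<Rightarrow> nat.
           (\<lambda>n. real (L n)) \<in> O(\<lambda>n. ln (real n)) \<and> (\<forall>n. L n \<ge> 1) \<and>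
           (\<forall>(k::nat) (m::nat) (xs::stream). k \<ge> 1 \<longrightarrow>
              (\<forall>u \<in> set xs. fst u \<in> {1..m} \<and> snd u > 0) \<longrightarrow>
              measure_pmf.prob (rbsm_run k (L (length xs)) xs)
                {s. \<forall>j::nat. real j < real k / c \<longrightarrow>
                      (\<forall>i \<in> {1..m}.
                         0 \<le> freq xs i - estimate s i \<and>
                         freq xs i - estimate s i \<le> Nres xs m j / (real k / c - real j))}
              \<ge> 1 - 1 / real (length xs))"
proof -
  define K where "K = 2 / - ln (rho c)"
  define L where "L n = nat \<lceil>K * ln (real n)\<rceil> + 1" for n
  have rho: "0 < rho c" "rho c < 1" using rho_pos rho_less_1 assms by auto
  then have "0 \<le> K" by (simp add: K_def)
  have L_ge_1: "1 \<le> L n" for n by (simp add: L_def)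
  have failure_le: "real n * rho c ^ L n \<le> 1 / real n" for n
  proof (cases "n = 0")
    case False
    have "K * ln (real n) \<le> real (L n)" by (simp add: L_def) linarith
    with rho False show ?thesis by (intro mult_power_le_inverse) (auto simp: K_def)
  qed simp
  have "1 - 1 / real (length xs) \<le> measure_pmf.prob (rbsm_run k (L (length xs)) xs)
           {s. \<forall>j::nat. real j < real k / c \<longrightarrow> (\<forall>i \<in> {1..m}.
                0 \<le> freq xs i - estimate s i \<and>
                freq xs i - estimate s i \<le> Nres xs m j / (real k / c - real j))}"
    if "1 \<le> k" "valid_stream m xs" for k m xs
    using prob_rbsm_run_error_bounds[OF that(2) assms that(1) L_ge_1[of "length xs"]] failure_le[of "length xs"]
    by linarith
  moreover have "(\<lambda>n. real (L n)) \<in> O(\<lambda>n. ln (real n))"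
    unfolding L_def using \<open>0 \<le> K\<close> by (rule ceiling_ln_bigo)
  ultimately show ?thesis
    using L_ge_1 unfolding valid_stream_def by blast
qed

end
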